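(* Let $n$ be a positive integer. There exist unbounded domains $D_1$ and $D_2$ in $\mathbb{C}^n$ such that the semigroups $E(D_1)$ and $E(D_2)$ are isomorphic, but there is no biholomorphic and no antibiholomorphic map from $D_1$ onto $D_2$.
   Context: For a domain $D$, $E(D)$ denotes the semigroup under composition of all holomorphic maps $D\to D$. *)

theory Defs
  imports "HOL-Analysis.Analysis" "HOL-Library.FuncSet"
begin

definition holo_on :: "(complex^'n \<Rightarrow> complex^'m) \<Rightarrow> (complex^'n) set \<Rightarrow> bool" where
  "holo_on f D \<longleftrightarrow> (\<forall>z\<in>D. \<exists>L. (f has_derivative L) (at z) \<and> Vector_Spaces.linear (*s) (*s) L)"

definition cconj :: "complex^'n \<Rightarrow> complex^'n" where
  "cconj z = (\<chi> i. cnj (z $ i))"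

definition antiholo_on :: "(complex^'n \<Rightarrow> complex^'m) \<Rightarrow> (complex^'n) set \<Rightarrow> bool" where
  "antiholo_on f D \<longleftrightarrow> holo_on (\<lambda>z. cconj (f z)) D"

definition domain_cn :: "(complex^'n) set \<Rightarrow> bool" where
  "domain_cn D \<longleftrightarrow> open D \<and> connected D \<and> D \<noteq> {}"

text \<open>E(D): holomorphic self-maps of D, represented extensionally (undefined outside D).\<close>
definition End_holo :: "(complex^'n) set \<Rightarrow> (complex^'n \<Rightarrow> complex^'n) set" where
  "End_holo D = {f. holo_on f D \<and> f ` D \<subseteq> D \<and> f \<in> extensional D}"

definition comp_on :: "(complex^'n) set \<Rightarrow> (complex^'n \<Rightarrow> complex^'n) \<Rightarrow> (complex^'n \<Rightarrow> complex^'n) \<Rightarrow> (complex^'n \<Rightarrow> complex^'n)" where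
  "comp_on D f g = restrict (f \<circ> g) D"

definition semigroups_iso :: "(complex^'n) set \<Rightarrow> (complex^'n) set \<Rightarrow> bool" where
  "semigroups_iso D1 D2 \<longleftrightarrow> (\<exists>\<Phi>. bij_betw \<Phi> (End_holo D1) (End_holo D2) \<and>
     (\<forall>f\<in>End_holo D1. \<forall>g\<in>End_holo D1. \<Phi> (comp_on D1 f g) = comp_on D2 (\<Phi> f) (\<Phi> g)))"

definition biholo_onto :: "(complex^'n \<Rightarrow> complex^'n) \<Rightarrow> (complex^'n) set \<Rightarrow> (complex^'n) set \<Rightarrow> bool" where
  "biholo_onto f D1 D2 \<longleftrightarrow> bij_betw f D1 D2 \<and> holo_on f D1 \<and> holo_on (inv_into D1 f) D2"

definition antibiholo_onto :: "(complex^'n \<Rightarrow> complex^'n) \<Rightarrow> (complex^'n) set \<Rightarrow> (complex^'n) set \<Rightarrow> bool" where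
  "antibiholo_onto f D1 D2 \<longleftrightarrow> bij_betw f D1 D2 \<and> antiholo_on f D1 \<and> antiholo_on (inv_into D1 f) D2"

end

theory Submission
  imports Defs "HOL-Complex_Analysis.Complex_Analysis"
    "HOL-Computational_Algebra.Fundamental_Theorem_Algebra"
    "HOL-Library.Equipollence"
begin

(* The domains are D_S = (C - S)^n for S = {0, 1, 3, 8} and T = {-1, 0, 1, 3, 8}.

   By the great Picard theorem a holomorphic map f : C - S -> C - T has a limit in the Riemann
   sphere at every puncture in S \<union> {\<infinity>}, and by Liouville's theorem these limits cover
   T \<union> {\<infinity>} unless f is constant.  Hence f is constant when |S| < |T|, and restricting to
   complex lines parallel to the axes, so is every holomorphic or antiholomorphic map D_S -> D_T.

   For a nonconstant self-map of C - S the limits permute S \<union> {\<infinity>}; as every point of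
   S \<union> {\<infinity>} then has a single preimage, f is a Moebius map permuting S \<union> {\<infinity>}, and
   for the two sets above only the identity does.  So each coordinate of a holomorphic self-map
   of D_S is constant or a coordinate of the argument, and conjugating by the coordinatewise
   action of any bijection C - S -> C - T, continuous or not, carries E(D_S) isomorphically
   onto E(D_T). *)

(* HOL-Analysis also uses $ for coefficients of formal power series. *)
no_notation fps_nth (infixl \<open>$\<close> 75)

section \<open>Limits at the punctures of the plane\<close>

lemma eventually_notin_finite:
  assumes "finite S" and "\<And>s. eventually (\<lambda>w. w \<noteq> s) F"
  shows "eventually (\<lambda>w. w \<notin> S) F"
proof -
  have "eventually (\<lambda>w. \<forall>s\<in>S. w \<noteq> s) F"
    using assms by (intro eventually_ball_finite) auto
  then show ?thesis
    by (rule eventually_mono) auto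
qed

lemma tendsto_inverse_diff_0:
  fixes f :: "'a \<Rightarrow> 'b::real_normed_div_algebra"
  assumes "filterlim f at_infinity F"
  shows "((\<lambda>z. inverse (f z - c)) \<longlongrightarrow> 0) F"
proof -
  have "filterlim (\<lambda>z. f z + (- c)) at_infinity F"
    using assms tendsto_const by (rule tendsto_add_filterlim_at_infinity')
  then show ?thesis
    by (simp add: filterlim_compose[OF tendsto_inverse_0])
qed

lemma holomorphic_on_UNIV_fill:
  fixes S :: "complex set"
  assumes S: "finite S" and holg: "g holomorphic_on - S"
    and lim: "\<And>s. s \<in> S \<Longrightarrow> (g \<longlongrightarrow> G s) (at s)" and eq: "\<And>z. z \<notin> S \<Longrightarrow> G z = g z"
  shows "G holomorphic_on UNIV"
proof (rule no_isolated_singularity'[OF _ _ open_UNIV S])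
  show "(G \<longlongrightarrow> G s) (at s within UNIV)" if "s \<in> S" for s
  proof -
    have "eventually (\<lambda>z. g z = G z) (at s)"
      using eventually_notin_finite[OF S eventually_neq_at_within] by eventually_elim (use eq in auto)
    then show ?thesis
      using lim[OF that] by (simp add: tendsto_cong)
  qed
  have "G holomorphic_on - S"
    by (rule holomorphic_transform[OF holg]) (simp add: eq)
  then show "G holomorphic_on UNIV - S"
    by (simp add: Compl_eq_Diff_UNIV)
qed

lemma pole_at_infinity_poly:
  assumes holG: "G holomorphic_on UNIV" and lim: "filterlim G at_infinity at_infinity"
  obtains P where "\<And>z. G z = poly P z"
proof -
  have "((inverse \<circ> G) \<longlongrightarrow> 0) at_infinity"
    using filterlim_compose[OF tendsto_inverse_0 lim] by (simp add: o_def)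
  then obtain a n where "\<And>z. G z = (\<Sum>i\<le>n. a i * z ^ i)"
    using pole_at_infinity[OF holG] by blast
  then have "\<And>z. G z = poly (\<Sum>i\<le>n. monom (a i) i) z"
    by (simp add: poly_sum poly_monom)
  then show thesis ..
qed

lemma great_Picard_limit:
  assumes M: "open M" "z \<in> M" and ab: "a \<noteq> b" and holf: "f holomorphic_on (M - {z})"
    and omit: "\<And>w. w \<in> M - {z} \<Longrightarrow> f w \<noteq> a \<and> f w \<noteq> b"
  shows "(\<exists>l. (f \<longlongrightarrow> l) (at z)) \<or> filterlim f at_infinity (at z)"
proof -
  let ?h = "\<lambda>w. f w - a"
  have "?h holomorphic_on (M - {z})"
    by (intro holomorphic_intros holf)
  moreover have "\<And>w. w \<in> M - {z} \<Longrightarrow> ?h w \<noteq> 0 \<and> ?h w \<noteq> b - a"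
    using omit by auto
  ultimately obtain l where "(?h \<longlongrightarrow> l) (at z) \<or> ((inverse \<circ> ?h) \<longlongrightarrow> l) (at z)"
    using great_Picard[OF M, of 0 "b - a" ?h] ab by auto
  then show ?thesis
  proof
    assume "(?h \<longlongrightarrow> l) (at z)"
    then have "((\<lambda>w. ?h w + a) \<longlongrightarrow> l + a) (at z)"
      by (intro tendsto_intros)
    then show ?thesis
      by auto
  next
    assume inv: "((inverse \<circ> ?h) \<longlongrightarrow> l) (at z)"
    show ?thesis
    proof (cases "l = 0")
      case True
      have "eventually (\<lambda>w. ?h w \<noteq> 0) (at z)"
        using eventually_at_in_open[OF M] by eventually_elim (use omit in auto)
      then have "filterlim (\<lambda>w. inverse (?h w)) (at 0) (at z)"
        using inv True by (intro filterlim_atI) (auto simp: o_def elim: eventually_mono)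
      then have "filterlim ?h at_infinity (at z)"
        by (simp add: filterlim_inverse_at_iff)
      then have "filterlim (\<lambda>w. ?h w + a) at_infinity (at z)"
        using tendsto_const by (rule tendsto_add_filterlim_at_infinity')
      then show ?thesis
        by simp
    next
      case False
      have "((\<lambda>w. inverse ((inverse \<circ> ?h) w) + a) \<longlongrightarrow> inverse l + a) (at z)"
        using inv False by (intro tendsto_intros)
      then show ?thesis
        by (auto simp: o_def)
    qed
  qed
qed

(* Points of the Riemann sphere are encoded as complex option, None standing for \<infinity>. *)

primrec at_sphere :: "complex option \<Rightarrow> complex filter" where
  "at_sphere (Some s) = at s"
| "at_sphere None = at_infinity"

primrec nhds_sphere :: "complex option \<Rightarrow> complex filter" where
  "nhds_sphere (Some w) = nhds w"
| "nhds_sphere None = at_infinity"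

abbreviation punctures :: "complex set \<Rightarrow> complex option set" where
  "punctures S \<equiv> insert None (Some ` S)"

lemma great_Picard_limit_at_puncture:
  fixes S :: "complex set"
  assumes S: "finite S" and ab: "a \<noteq> b" and holf: "f holomorphic_on - S"
    and omit: "\<And>w. w \<notin> S \<Longrightarrow> f w \<noteq> a \<and> f w \<noteq> b"
    and x: "x \<in> punctures S"
  shows "\<exists>y. filterlim f (nhds_sphere y) (at_sphere x)"
proof (cases x)
  case (Some s)
  then have s: "s \<in> S" using x by auto
  have "open (- (S - {s}))"
    using S by (intro open_Compl finite_imp_closed) simp
  moreover have "- (S - {s}) - {s} = - S"
    using s by auto
  ultimately have "(\<exists>l. (f \<longlongrightarrow> l) (at s)) \<or> filterlim f at_infinity (at s)"
    using great_Picard_limit[of "- (S - {s})" s a b f] ab holf omit by auto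
  then show ?thesis
    by (metis Some at_sphere.simps(1) nhds_sphere.simps)
next
  case None
  let ?M = "- (inverse ` (S - {0}))"
  have M: "open ?M" "0 \<in> ?M"
    using S by (auto intro: open_Compl finite_imp_closed)
  have inv_M: "inverse w \<notin> S" if "w \<in> ?M - {0}" for w
  proof
    assume "inverse w \<in> S"
    then have "inverse (inverse w) \<in> inverse ` (S - {0})"
      using that by (intro imageI) auto
    with that show False by simp
  qed
  have "(f \<circ> inverse) holomorphic_on (?M - {0})"
    by (intro holomorphic_on_compose holomorphic_intros holomorphic_on_subset[OF holf])
       (use inv_M in auto)
  then have "(\<exists>l. ((f \<circ> inverse) \<longlongrightarrow> l) (at 0)) \<or> filterlim (f \<circ> inverse) at_infinity (at 0)"
    using great_Picard_limit[OF M ab, of "f \<circ> inverse"] omit inv_M by auto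
  then obtain y where "filterlim (f \<circ> inverse) (nhds_sphere y) (at 0)"
    by (metis nhds_sphere.simps)
  then show ?thesis
    by (auto simp: None at_to_infinity filterlim_filtermap o_def)
qed

lemma Liouville_punctured_sphere:
  fixes S :: "complex set"
  assumes S: "finite S" and holh: "h holomorphic_on - S"
    and lim: "\<And>x. x \<in> punctures S \<Longrightarrow> \<exists>l. (h \<longlongrightarrow> l) (at_sphere x)"
    and z: "z \<notin> S" and w: "w \<notin> S"
  shows "h z = h w"
proof -
  obtain l where l: "\<And>x. x \<in> punctures S \<Longrightarrow> (h \<longlongrightarrow> l x) (at_sphere x)"
    using lim by metis
  define G where "G z = (if z \<in> S then l (Some z) else h z)" for z
  have "(h \<longlongrightarrow> G s) (at s)" if "s \<in> S" for s
    using l[of "Some s"] that by (simp add: G_def)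
  then have "G holomorphic_on UNIV"
    by (intro holomorphic_on_UNIV_fill[OF S holh]) (auto simp: G_def)
  moreover have "eventually (\<lambda>z. h z = G z) at_infinity"
    using eventually_notin_finite[OF S eventually_not_equal_at_infinity]
    by eventually_elim (simp add: G_def)
  then have "(G \<longlongrightarrow> l None) at_infinity"
    using l[of None] by (simp add: tendsto_cong)
  ultimately have "G z = l None" "G w = l None"
    by (simp_all add: Liouville_weak)
  then show ?thesis
    using z w by (simp add: G_def)
qed

lemma puncture_limits_cover:
  fixes S T :: "complex set"
  assumes S: "finite S" and holf: "f holomorphic_on - S" and fT: "\<And>z. z \<notin> S \<Longrightarrow> f z \<notin> T"
    and L: "\<And>x. x \<in> punctures S \<Longrightarrow> filterlim f (nhds_sphere (L x)) (at_sphere x)"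
    and nonconst: "x1 \<notin> S" "x2 \<notin> S" "f x1 \<noteq> f x2"
  shows "punctures T \<subseteq> L ` punctures S"
proof
  fix y assume y: "y \<in> punctures T"
  show "y \<in> L ` punctures S"
  proof (rule ccontr)
    assume miss: "y \<notin> L ` punctures S"
    define h where "h = (\<lambda>z. case y of None \<Rightarrow> f z | Some t \<Rightarrow> inverse (f z - t))"
    have "h holomorphic_on - S"
      using fT y by (cases y) (auto simp: h_def intro!: holomorphic_intros holf)
    moreover have "\<exists>l. (h \<longlongrightarrow> l) (at_sphere x)" if x: "x \<in> punctures S" for x
    proof -
      have "filterlim f (nhds_sphere (L x)) (at_sphere x)" "L x \<noteq> y"
        using L[OF x] miss x by blast+
      then show ?thesis
        by (cases y; cases "L x") (auto simp: h_def intro!: exI tendsto_intros tendsto_inverse_diff_0)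
    qed
    ultimately have "h x1 = h x2"
      using Liouville_punctured_sphere[OF S] nonconst by blast
    then show False
      using nonconst by (cases y) (auto simp: h_def)
  qed
qed

lemma puncture_limits_exist:
  fixes S T :: "complex set"
  assumes S: "finite S" and T: "finite T" "2 \<le> card T" and holf: "f holomorphic_on - S"
    and fT: "\<And>z. z \<notin> S \<Longrightarrow> f z \<notin> T"
  obtains L where "\<And>x. x \<in> punctures S \<Longrightarrow> filterlim f (nhds_sphere (L x)) (at_sphere x)"
proof -
  obtain a b where "a \<in> T" "b \<in> T" "a \<noteq> b"
    using T card_le_Suc0_iff_eq[of T] by auto
  then have "\<forall>x\<in>punctures S. \<exists>y. filterlim f (nhds_sphere y) (at_sphere x)"
    using fT by (intro ballI great_Picard_limit_at_puncture[OF S _ holf]) auto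
  then show thesis
    using that by metis
qed

theorem holomorphic_compl_map_constant:
  fixes S T :: "complex set"
  assumes S: "finite S" and T: "finite T" "2 \<le> card T" and card: "card S < card T"
    and holf: "f holomorphic_on - S" and fT: "\<And>z. z \<notin> S \<Longrightarrow> f z \<notin> T"
    and z: "z \<notin> S" and w: "w \<notin> S"
  shows "f z = f w"
proof (rule ccontr)
  assume "f z \<noteq> f w"
  obtain L where L: "\<And>x. x \<in> punctures S \<Longrightarrow> filterlim f (nhds_sphere (L x)) (at_sphere x)"
    using puncture_limits_exist[OF S T holf fT] by blast
  have "card (punctures T) \<le> card (punctures S)"
    using puncture_limits_cover[OF S holf fT L z w \<open>f z \<noteq> f w\<close>] S by (intro surj_card_le) auto
  with S T card show False
    by (simp add: card_image)
qed

lemma puncture_limits_permute: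
  fixes S :: "complex set"
  assumes S: "finite S" "2 \<le> card S" and holf: "f holomorphic_on - S"
    and fS: "\<And>z. z \<notin> S \<Longrightarrow> f z \<notin> S"
    and nonconst: "x1 \<notin> S" "x2 \<notin> S" "f x1 \<noteq> f x2"
  obtains L where "bij_betw L (punctures S) (punctures S)"
    "\<And>x. x \<in> punctures S \<Longrightarrow> filterlim f (nhds_sphere (L x)) (at_sphere x)"
proof -
  obtain L where L: "\<And>x. x \<in> punctures S \<Longrightarrow> filterlim f (nhds_sphere (L x)) (at_sphere x)"
    using puncture_limits_exist[OF S(1) S holf fS] by blast
  have fin: "finite (punctures S)"
    using S by simp
  have cover: "punctures S \<subseteq> L ` punctures S"
    by (rule puncture_limits_cover[OF S(1) holf fS L nonconst])
  have "card (L ` punctures S) \<le> card (punctures S)"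
    using fin by (rule card_image_le)
  then have "card (punctures S) = card (L ` punctures S)"
    using card_mono[OF finite_imageI[OF fin] cover] by simp
  then have "L ` punctures S = punctures S"
    by (rule card_subset_eq[OF finite_imageI[OF fin] cover, symmetric])
  moreover have "inj_on L (punctures S)"
    using fin cover by (rule finite_surj_inj)
  ultimately have "bij_betw L (punctures S) (punctures S)"
    by (intro bij_betw_imageI)
  then show thesis
    using L by (rule that)
qed

section \<open>Holomorphic self-maps of a punctured plane\<close>

lemma poly_single_fibre:
  fixes p :: "complex poly"
  assumes fibre: "\<And>z. poly p z = t \<longleftrightarrow> z = r" and nonconst: "poly p y \<noteq> t"
  obtains c k where "c \<noteq> 0" "\<And>z. poly p z = t + c * (z - r) ^ k"
proof -
  define q where "q = p - [:t:]"
  have "q \<noteq> 0"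
    using nonconst by (auto simp: q_def)
  then obtain u where qu: "q = [:- r, 1:] ^ order r q * u" and ndvd: "\<not> [:- r, 1:] dvd u"
    using order_decomp by blast
  have q_eq: "poly q z = (z - r) ^ order r q * poly u z" for z
    by (subst qu) simp
  have u_nonzero: "poly u z \<noteq> 0" for z
  proof
    assume "poly u z = 0"
    then have "z = r"
      using fibre q_eq[of z] by (simp add: q_def)
    with \<open>poly u z = 0\<close> ndvd show False
      by (simp add: poly_eq_0_iff_dvd)
  qed
  then obtain c where "\<And>z. poly u z = c"
    using fundamental_theorem_of_algebra unfolding constant_def by blast
  then have "poly p z = t + c * (z - r) ^ order r q" for z
    using q_eq[of z] by (simp add: q_def diff_eq_eq ac_simps)
  moreover have "c \<noteq> 0"
    using u_nonzero \<open>\<And>z. poly u z = c\<close> by metis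
  ultimately show thesis
    using that by blast
qed

lemma poly_affine_if_two_single_fibres:
  fixes p :: "complex poly"
  assumes "t1 \<noteq> t2"
    and fibre1: "\<And>z. poly p z = t1 \<longleftrightarrow> z = r1" and fibre2: "\<And>z. poly p z = t2 \<longleftrightarrow> z = r2"
  obtains c where "c \<noteq> 0" "\<And>z. poly p z = t1 + c * (z - r1)"
proof -
  have r: "poly p r1 = t1" "poly p r2 = t2"
    by (simp_all add: fibre1 fibre2)
  with \<open>t1 \<noteq> t2\<close> have "r1 \<noteq> r2" "poly p r2 \<noteq> t1" "poly p r1 \<noteq> t2"
    by auto
  obtain c1 k1 where c1: "c1 \<noteq> 0" and eq1: "\<And>z. poly p z = t1 + c1 * (z - r1) ^ k1"
    using poly_single_fibre[OF fibre1 \<open>poly p r2 \<noteq> t1\<close>] by blast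
  then have p1: "poly p = (\<lambda>z. t1 + c1 * (z - r1) ^ k1)"
    using eq1 by (simp add: fun_eq_iff)
  obtain c2 k2 where c2: "c2 \<noteq> 0" and eq2: "\<And>z. poly p z = t2 + c2 * (z - r2) ^ k2"
    using poly_single_fibre[OF fibre2 \<open>poly p r1 \<noteq> t2\<close>] by blast
  then have p2: "poly p = (\<lambda>z. t2 + c2 * (z - r2) ^ k2)"
    using eq2 by (simp add: fun_eq_iff)
  have "k1 \<noteq> 0"
    using eq1[of r1] r(1) c1 by (cases k1) auto
  have "k2 \<noteq> 0"
    using eq2[of r2] r(2) c2 by (cases k2) auto
  (* At r1 the first form has derivative zero unless k1 = 1; the second has nonzero derivative. *)
  have "k1 = 1"
  proof (rule ccontr)
    assume "k1 \<noteq> 1"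
    have "(r1 - r1) ^ (k1 - 1) = 0"
      using \<open>k1 \<noteq> 0\<close> \<open>k1 \<noteq> 1\<close> by simp
    moreover have "(poly p has_field_derivative c1 * (of_nat k1 * (r1 - r1) ^ (k1 - 1))) (at r1)"
      unfolding p1 by (auto intro!: derivative_eq_intros)
    ultimately have "(poly p has_field_derivative 0) (at r1)"
      by (metis mult_zero_right)
    moreover have "(poly p has_field_derivative c2 * (of_nat k2 * (r1 - r2) ^ (k2 - 1))) (at r1)"
      unfolding p2 by (auto intro!: derivative_eq_intros)
    ultimately have "0 = c2 * (of_nat k2 * (r1 - r2) ^ (k2 - 1))"
      by (rule DERIV_unique)
    with c2 \<open>k2 \<noteq> 0\<close> \<open>r1 \<noteq> r2\<close> show False
      by simp
  qed
  then have "poly p z = t1 + c1 * (z - r1)" for z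
    using eq1[of z] by simp
  with c1 show thesis
    by (rule that)
qed

locale compl_self_map =
  fixes S :: "complex set" and f :: "complex \<Rightarrow> complex" and L :: "complex option \<Rightarrow> complex option"
  assumes finite: "finite S" and holo: "f holomorphic_on - S" and maps: "\<And>z. z \<notin> S \<Longrightarrow> f z \<notin> S"
    and perm: "bij_betw L (punctures S) (punctures S)"
    and lim: "\<And>x. x \<in> punctures S \<Longrightarrow> filterlim f (nhds_sphere (L x)) (at_sphere x)"
begin

definition extension :: "complex \<Rightarrow> complex option" where
  "extension z = (if z \<in> S then L (Some z) else Some (f z))"

lemma L_eq_iff: "x \<in> punctures S \<Longrightarrow> y \<in> punctures S \<Longrightarrow> L x = L y \<longleftrightarrow> x = y"
  by (rule inj_on_eq_iff[OF bij_betw_imp_inj_on[OF perm]])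

lemma L_in: "x \<in> punctures S \<Longrightarrow> L x \<in> punctures S"
  by (rule bij_betw_apply[OF perm])

lemma L_preimage:
  assumes "y \<in> punctures S" obtains x where "x \<in> punctures S" "L x = y"
proof -
  have "y \<in> L ` punctures S"
    by (metis assms bij_betw_imp_surj_on[OF perm])
  then show thesis
    using that by blast
qed

lemma extension_fibre:
  assumes r: "r \<in> S" "L (Some r) = Some t" and t: "t \<in> S"
  shows "extension z = Some t \<longleftrightarrow> z = r"
  using r t maps L_eq_iff[of "Some z" "Some r"] by (auto simp: extension_def)

lemma extension_limit: "s \<in> S \<Longrightarrow> filterlim f (nhds_sphere (extension s)) (at s)"
  using lim[of "Some s"] by (simp add: extension_def)

lemma L_preimage_Some:
  assumes "t \<in> S" "L None \<noteq> Some t"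
  obtains r where "r \<in> S" "L (Some r) = Some t"
proof -
  from assms(1) have "Some t \<in> punctures S"
    by simp
  then obtain x where x: "x \<in> punctures S" "L x = Some t"
    by (rule L_preimage)
  with assms obtain r where "x = Some r"
    by (cases x) auto
  with x show thesis
    using that by auto
qed

lemma extension_in: "z \<in> S \<Longrightarrow> extension z = Some w \<Longrightarrow> w \<in> S"
  using L_in[of "Some z"] by (auto simp: extension_def)

lemma polynomial_if_infinity_fixed:
  assumes infty: "L None = None"
  obtains P where "\<And>z. extension z = Some (poly P z)"
proof -
  define G where "G z = the (extension z)" for z
  have G: "extension z = Some (G z)" for z
    using L_eq_iff[of "Some z" None] L_in[of "Some z"] infty
    by (cases "z \<in> S") (auto simp: G_def extension_def)
  have "(f \<longlongrightarrow> G s) (at s)" if "s \<in> S" for s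
    using extension_limit[OF that] G[of s] by simp
  then have "G holomorphic_on UNIV"
    by (intro holomorphic_on_UNIV_fill[OF finite holo]) (auto simp: G_def extension_def)
  moreover have "eventually (\<lambda>z. f z = G z) at_infinity"
    using eventually_notin_finite[OF finite eventually_not_equal_at_infinity]
    by eventually_elim (simp add: G_def extension_def)
  then have "filterlim G at_infinity at_infinity"
    using lim[of None] infty filterlim_cong by fastforce
  ultimately obtain P where "\<And>z. G z = poly P z"
    using pole_at_infinity_poly by blast
  with G show thesis
    using that by metis
qed

lemma affine_if_infinity_fixed:
  assumes infty: "L None = None" and card: "2 \<le> card S"
  obtains \<alpha> \<beta> where "\<alpha> \<noteq> 0" "\<And>z. z \<notin> S \<Longrightarrow> f z = \<alpha> * z + \<beta>" "\<And>s. s \<in> S \<Longrightarrow> \<alpha> * s + \<beta> \<in> S"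
proof -
  obtain P where P: "\<And>z. extension z = Some (poly P z)"
    using polynomial_if_infinity_fixed[OF infty] by blast
  have fibre: "poly P z = t \<longleftrightarrow> z = r" if "r \<in> S" "L (Some r) = Some t" "t \<in> S" for r t z
    using extension_fibre[OF that, of z] P[of z] by auto
  obtain a b where ab: "a \<in> S" "b \<in> S" "a \<noteq> b"
    using card card_le_Suc0_iff_eq[OF finite] by auto
  obtain ra rb where ra: "ra \<in> S" "L (Some ra) = Some a" and rb: "rb \<in> S" "L (Some rb) = Some b"
    using L_preimage_Some ab infty by (metis option.distinct(1))
  obtain c where c: "c \<noteq> 0" "\<And>z. poly P z = a + c * (z - ra)"
    using poly_affine_if_two_single_fibres[OF \<open>a \<noteq> b\<close> fibre[OF ra ab(1)] fibre[OF rb ab(2)]] by blast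
  show thesis
  proof
    show "c \<noteq> 0" by fact
    show "f z = c * z + (a - c * ra)" if "z \<notin> S" for z
      using P[of z] that c(2)[of z] by (simp add: extension_def algebra_simps)
    show "c * s + (a - c * ra) \<in> S" if "s \<in> S" for s
      using extension_in[OF that P[of s]] c(2)[of s] by (simp add: algebra_simps)
  qed
qed

lemma infinity_image_in:
  assumes "L None = Some s0" shows "s0 \<in> S"
  using L_in[of None] assms by auto

lemma extension_ne_infinity_image:
  assumes "L None = Some s0" shows "extension z \<noteq> Some s0"
  using maps[of z] infinity_image_in[OF assms] L_eq_iff[of "Some z" None] assms
  by (auto simp: extension_def)

lemma polynomial_if_infinity_moved:
  assumes infty: "L None = Some s0"
  obtains P where "\<And>z. poly P z = (case extension z of None \<Rightarrow> 0 | Some w \<Rightarrow> inverse (w - s0))"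
proof -
  note s0 = infinity_image_in[OF infty]
  define G where "G z = (case extension z of None \<Rightarrow> 0 | Some w \<Rightarrow> inverse (w - s0))" for z
  have G_outside: "G z = inverse (f z - s0)" if "z \<notin> S" for z
    using that by (simp add: G_def extension_def)
  have "(\<lambda>z. inverse (f z - s0)) holomorphic_on - S"
    using maps s0 by (intro holomorphic_intros holo) auto
  moreover have "((\<lambda>z. inverse (f z - s0)) \<longlongrightarrow> G s) (at s)" if "s \<in> S" for s
    using extension_limit[OF that] extension_ne_infinity_image[OF infty, of s]
    by (cases "extension s") (auto simp: G_def intro: tendsto_inverse_diff_0 intro!: tendsto_intros)
  ultimately have "G holomorphic_on UNIV"
    using G_outside by (intro holomorphic_on_UNIV_fill[OF finite]) auto
  moreover have "filterlim G at_infinity at_infinity"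
  proof -
    have "eventually (\<lambda>z. z \<notin> S) at_infinity"
      by (rule eventually_notin_finite[OF finite eventually_not_equal_at_infinity])
    then have ev: "eventually (\<lambda>z. f z - s0 \<noteq> 0 \<and> inverse (f z - s0) = G z) at_infinity"
      by eventually_elim (use maps s0 G_outside in force)
    have "((\<lambda>z. f z - s0) \<longlongrightarrow> 0) at_infinity"
      using lim[of None] infty by (simp add: LIM_zero)
    moreover have "eventually (\<lambda>z. f z - s0 \<noteq> 0) at_infinity"
      using ev by (rule eventually_mono) simp
    ultimately have "filterlim (\<lambda>z. f z - s0) (at 0) at_infinity"
      by (rule filterlim_atI)
    then have "filterlim (\<lambda>z. inverse (f z - s0)) at_infinity at_infinity"
      by (rule filterlim_compose[OF filterlim_inverse_at_infinity])
    moreover have "eventually (\<lambda>z. inverse (f z - s0) = G z) at_infinity"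
      using ev by (rule eventually_mono) simp
    ultimately show ?thesis
      using filterlim_cong by fastforce
  qed
  ultimately obtain P where "\<And>z. G z = poly P z"
    using pole_at_infinity_poly by blast
  then show thesis
    using that by (simp add: G_def)
qed

lemma inversion_if_infinity_moved:
  assumes infty: "L None = Some s0" and card: "3 \<le> card S"
  obtains p k where "p \<in> S" "\<And>q. q \<in> S - {p} \<Longrightarrow> \<exists>w\<in>S - {s0}. (w - s0) * (q - p) = k"
proof -
  note s0 = infinity_image_in[OF infty]
  obtain P where P: "\<And>z. poly P z = (case extension z of None \<Rightarrow> 0 | Some w \<Rightarrow> inverse (w - s0))"
    using polynomial_if_infinity_moved[OF infty] by blast
  obtain p where p: "p \<in> S" "L (Some p) = None"
    using L_preimage[of None] infty by (metis insertI1 insert_iff option.distinct(1) imageE)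
  have fibre: "poly P z = inverse (t - s0) \<longleftrightarrow> z = r"
    if "r \<in> S" "L (Some r) = Some t" "t \<in> S - {s0}" for r t z
    using extension_fibre[of r t z] that P[of z] by (cases "extension z") auto
  obtain t1 t2 where t: "t1 \<in> S - {s0}" "t2 \<in> S - {s0}" "t1 \<noteq> t2"
    using card finite s0 card_le_Suc0_iff_eq[of "S - {s0}"] by auto
  obtain r1 r2 where r1: "r1 \<in> S" "L (Some r1) = Some t1" and r2: "r2 \<in> S" "L (Some r2) = Some t2"
    using L_preimage_Some t infty by (metis DiffD1 DiffD2 insertI1 option.inject)
  have "inverse (t1 - s0) \<noteq> inverse (t2 - s0)"
    using t by auto
  then obtain c where c: "c \<noteq> 0" "\<And>z. poly P z = inverse (t1 - s0) + c * (z - r1)"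
    using poly_affine_if_two_single_fibres fibre[OF r1 t(1)] fibre[OF r2 t(2)] by blast
  have "poly P p = 0"
    using P[of p] p by (simp add: extension_def)
  then have linear: "poly P z = c * (z - p)" for z
    using c(2)[of z] c(2)[of p] by algebra
  show thesis
  proof (rule that[OF p(1)])
    fix q assume q: "q \<in> S - {p}"
    then obtain w where w: "extension q = Some w"
      using L_eq_iff[of "Some q" "Some p"] p by (auto simp: extension_def)
    then have "w \<in> S - {s0}"
      using extension_in[of q w] q extension_ne_infinity_image[OF infty, of q] by auto
    moreover have "inverse (w - s0) = c * (q - p)"
      using P[of q] linear[of q] w by simp
    then have "(w - s0) * (q - p) = inverse c"
      using c(1) \<open>w \<in> S - {s0}\<close> by (simp add: field_simps)
    ultimately show "\<exists>w\<in>S - {s0}. (w - s0) * (q - p) = inverse c"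
      by blast
  qed
qed

end

definition rigid :: "complex set \<Rightarrow> bool" where
  "rigid S \<longleftrightarrow> (\<forall>f. f holomorphic_on - S \<and> (\<forall>z. z \<notin> S \<longrightarrow> f z \<notin> S) \<longrightarrow>
     (\<exists>c. \<forall>z. z \<notin> S \<longrightarrow> f z = c) \<or> (\<forall>z. z \<notin> S \<longrightarrow> f z = z))"

definition affinely_rigid :: "complex set \<Rightarrow> bool" where
  "affinely_rigid S \<longleftrightarrow> (\<forall>\<alpha> \<beta>. \<alpha> \<noteq> 0 \<and> (\<forall>s\<in>S. \<alpha> * s + \<beta> \<in> S) \<longrightarrow> \<alpha> = 1 \<and> \<beta> = 0)"

(* Some Moebius map z \<mapsto> s0 + k / (z - p) sends S - {p} into S - {s0}. *)
definition inversion_symmetric :: "complex set \<Rightarrow> bool" where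
  "inversion_symmetric S \<longleftrightarrow>
     (\<exists>p\<in>S. \<exists>s0\<in>S. \<exists>k. \<forall>q\<in>S - {p}. \<exists>w\<in>S - {s0}. (w - s0) * (q - p) = k)"

lemma nonconstant_self_map_identity:
  assumes S: "finite S" "3 \<le> card S" and aff: "affinely_rigid S" and inv: "\<not> inversion_symmetric S"
    and holf: "f holomorphic_on - S" and fS: "\<And>z. z \<notin> S \<Longrightarrow> f z \<notin> S"
    and nonconst: "x1 \<notin> S" "x2 \<notin> S" "f x1 \<noteq> f x2" and z: "z \<notin> S"
  shows "f z = z"
proof -
  have card2: "2 \<le> card S"
    using S(2) by simp
  obtain L where "bij_betw L (punctures S) (punctures S)"
    "\<And>x. x \<in> punctures S \<Longrightarrow> filterlim f (nhds_sphere (L x)) (at_sphere x)"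
    using puncture_limits_permute[OF S(1) card2 holf fS nonconst] by blast
  then interpret compl_self_map S f L
    using S(1) holf fS by unfold_locales
  show ?thesis
  proof (cases "L None")
    case None
    obtain \<alpha> \<beta> where \<alpha>: "\<alpha> \<noteq> 0" and f_eq: "\<And>z. z \<notin> S \<Longrightarrow> f z = \<alpha> * z + \<beta>"
      and S_inv: "\<And>s. s \<in> S \<Longrightarrow> \<alpha> * s + \<beta> \<in> S"
      using affine_if_infinity_fixed[OF None card2] by blast
    have "\<alpha> = 1 \<and> \<beta> = 0"
      using aff \<alpha> S_inv unfolding affinely_rigid_def by blast
    then show ?thesis
      using f_eq[OF z] by simp
  next
    case (Some s0)
    obtain p k where "p \<in> S" "\<And>q. q \<in> S - {p} \<Longrightarrow> \<exists>w\<in>S - {s0}. (w - s0) * (q - p) = k"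
      using inversion_if_infinity_moved[OF Some S(2)] by blast
    with inv infinity_image_in[OF Some] show ?thesis
      unfolding inversion_symmetric_def by blast
  qed
qed

theorem rigidI:
  assumes "finite S" "3 \<le> card S" "affinely_rigid S" "\<not> inversion_symmetric S"
  shows "rigid S"
  unfolding rigid_def
proof (intro allI impI)
  fix f assume f: "f holomorphic_on - S \<and> (\<forall>z. z \<notin> S \<longrightarrow> f z \<notin> S)"
  show "(\<exists>c. \<forall>z. z \<notin> S \<longrightarrow> f z = c) \<or> (\<forall>z. z \<notin> S \<longrightarrow> f z = z)"
  proof (cases "\<exists>x1 x2. x1 \<notin> S \<and> x2 \<notin> S \<and> f x1 \<noteq> f x2")
    case True
    then show ?thesis
      using nonconstant_self_map_identity[OF assms] f by blast
  next
    case False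
    obtain a where "a \<notin> S"
      using ex_new_if_finite[OF infinite_UNIV_char_0 assms(1)] by blast
    with False show ?thesis
      by blast
  qed
qed

lemma affinely_rigidI:
  assumes "0 \<in> S" "1 \<in> S"
    and "\<forall>b\<in>S. \<forall>c\<in>S. c \<noteq> b \<and> (\<forall>s\<in>S. (c - b) * s + b \<in> S) \<longrightarrow> c - b = 1 \<and> b = 0"
  shows "affinely_rigid S"
  unfolding affinely_rigid_def
proof (intro allI impI, elim conjE)
  fix \<alpha> \<beta> :: complex
  assume "\<alpha> \<noteq> 0" and S_inv: "\<forall>s\<in>S. \<alpha> * s + \<beta> \<in> S"
  have "\<beta> \<in> S" "\<alpha> + \<beta> \<in> S"
    using S_inv assms(1,2) by force+
  moreover have "\<alpha> + \<beta> \<noteq> \<beta>" "\<forall>s\<in>S. ((\<alpha> + \<beta>) - \<beta>) * s + \<beta> \<in> S"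
    using \<open>\<alpha> \<noteq> 0\<close> S_inv by simp_all
  ultimately have "(\<alpha> + \<beta>) - \<beta> = 1 \<and> \<beta> = 0"
    using assms(3) by blast
  then show "\<alpha> = 1 \<and> \<beta> = 0"
    by simp
qed

(* Decidable by evaluation for explicit S: k is eliminated, as it must equal (w0 - s0) * (q0 - p)
   for any fixed q0 \<noteq> p. *)
lemma not_inversion_symmetricI:
  assumes "\<forall>p\<in>S. \<forall>s0\<in>S. \<exists>q0\<in>S. q0 \<noteq> p \<and> (\<forall>w0\<in>S. w0 \<noteq> s0 \<longrightarrow>
     (\<exists>q\<in>S. q \<noteq> p \<and> (\<forall>w\<in>S. w \<noteq> s0 \<longrightarrow> (w - s0) * (q - p) \<noteq> (w0 - s0) * (q0 - p))))"
  shows "\<not> inversion_symmetric S"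
  unfolding inversion_symmetric_def
proof clarify
  fix p s0 k
  assume p: "p \<in> S" and s0: "s0 \<in> S" and sym: "\<forall>q\<in>S - {p}. \<exists>w\<in>S - {s0}. (w - s0) * (q - p) = k"
  from assms p s0 obtain q0 where q0: "q0 \<in> S" "q0 \<noteq> p" and
    H: "\<forall>w0\<in>S. w0 \<noteq> s0 \<longrightarrow> (\<exists>q\<in>S. q \<noteq> p \<and> (\<forall>w\<in>S. w \<noteq> s0 \<longrightarrow> (w - s0) * (q - p) \<noteq> (w0 - s0) * (q0 - p)))"
    by blast
  from sym q0 obtain w0 where w0: "w0 \<in> S" "w0 \<noteq> s0" and k: "k = (w0 - s0) * (q0 - p)"
    by fastforce
  from H w0 obtain q where "q \<in> S" "q \<noteq> p" "\<forall>w\<in>S. w \<noteq> s0 \<longrightarrow> (w - s0) * (q - p) \<noteq> k"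
    unfolding k by blast
  with sym show False
    by blast
qed

lemma rigid_0_1_3_8: "rigid {0, 1, 3, 8}"
  by (intro rigidI affinely_rigidI not_inversion_symmetricI) simp_all

lemma rigid_minus_1_0_1_3_8: "rigid {-1, 0, 1, 3, 8}"
  by (intro rigidI affinely_rigidI not_inversion_symmetricI) simp_all

section \<open>Products of punctured planes\<close>

definition punctured_power :: "complex set \<Rightarrow> (complex^'n) set" where
  "punctured_power S = {z. \<forall>i. z $ i \<notin> S}"

lemma mem_punctured_power [simp]: "z \<in> punctured_power S \<longleftrightarrow> (\<forall>i. z $ i \<notin> S)"
  by (simp add: punctured_power_def)

definition vec_upd :: "'a^'n \<Rightarrow> 'n \<Rightarrow> 'a \<Rightarrow> 'a^'n" where
  "vec_upd z j x = (\<chi> k. if k = j then x else z $ k)"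

lemma vec_upd_nth [simp]: "vec_upd z j x $ k = (if k = j then x else z $ k)"
  by (simp add: vec_upd_def)

lemma vec_upd_same [simp]: "vec_upd z j (z $ j) = z"
  by (simp add: vec_eq_iff)

lemma continuous_on_vec_upd: "continuous_on A (\<lambda>z. vec_upd z j x)"
  unfolding vec_upd_def
proof (intro continuous_on_vec_lambda)
  show "continuous_on A (\<lambda>z. if k = j then x else z $ k)" for k
    by (cases "k = j") (auto intro: continuous_intros)
qed

lemma open_punctured_power:
  assumes "closed S" shows "open (punctured_power S :: (complex^'n) set)"
proof -
  have "(punctured_power S :: (complex^'n) set) = (\<Inter>i. (\<lambda>z. z $ i) -` (- S))"
    by auto
  then show ?thesis
    using assms by (auto intro!: open_INT open_vimage_vec_nth)
qed

lemma path_connected_punctured_power: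
  assumes "countable S" shows "path_connected (punctured_power S :: (complex^'n) set)"
  unfolding path_connected_def
proof (intro ballI)
  fix z w :: "complex^'n" assume z: "z \<in> punctured_power S" and w: "w \<in> punctured_power S"
  have "path_connected (- S)"
    using assms by (intro path_connected_complement_countable) simp_all
  then have "\<forall>i. \<exists>g. path g \<and> path_image g \<subseteq> - S \<and> pathstart g = z $ i \<and> pathfinish g = w $ i"
    using z w unfolding path_connected_def by simp
  then obtain \<gamma> where \<gamma>: "\<And>i. path (\<gamma> i) \<and> path_image (\<gamma> i) \<subseteq> - S \<and> pathstart (\<gamma> i) = z $ i \<and> pathfinish (\<gamma> i) = w $ i"
    by metis
  define g where "g t = (\<chi> i. \<gamma> i t)" for t
  have "path g"
    unfolding path_def g_def by (intro continuous_on_vec_lambda) (use \<gamma> in \<open>auto simp: path_def\<close>)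
  moreover have "path_image g \<subseteq> punctured_power S"
    using \<gamma> by (fastforce simp: path_image_def g_def)
  moreover have "pathstart g = z" "pathfinish g = w"
    using \<gamma> by (auto simp: pathstart_def pathfinish_def g_def vec_eq_iff)
  ultimately show "\<exists>g. path g \<and> path_image g \<subseteq> punctured_power S \<and> pathstart g = z \<and> pathfinish g = w"
    by blast
qed

lemma unbounded_punctured_power:
  assumes "bounded S" shows "\<not> bounded (punctured_power S :: (complex^'n) set)"
proof
  obtain B where B: "\<And>s. s \<in> S \<Longrightarrow> norm s \<le> B"
    using assms bounded_iff by blast
  assume "bounded (punctured_power S :: (complex^'n) set)"
  then obtain C where C: "\<And>z. z \<in> (punctured_power S :: (complex^'n) set) \<Longrightarrow> norm z \<le> C"
    using bounded_iff by blast
  define r where "r = max B C + 1"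
  let ?z = "(\<chi> i. complex_of_real r) :: complex^'n"
  have "?z \<in> punctured_power S"
    using B[of "complex_of_real r"] by (auto simp: r_def)
  moreover have "r \<le> norm ?z"
    using Finite_Cartesian_Product.norm_nth_le[of ?z undefined] by (simp add: r_def)
  ultimately show False
    using C[of ?z] by (simp add: r_def)
qed

lemma domain_cn_punctured_power:
  assumes "finite S" shows "domain_cn (punctured_power S :: (complex^'n) set)"
proof -
  have "\<not> bounded (punctured_power S :: (complex^'n) set)"
    using assms by (intro unbounded_punctured_power finite_imp_bounded)
  then have "(punctured_power S :: (complex^'n) set) \<noteq> {}"
    by auto
  then show ?thesis
    unfolding domain_cn_def using assms
    by (simp add: open_punctured_power finite_imp_closed countable_finite
        path_connected_imp_connected path_connected_punctured_power)
qed

lemma holo_on_imp_continuous_on: "holo_on F D \<Longrightarrow> continuous_on D F"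
  unfolding holo_on_def
  by (intro continuous_at_imp_continuous_on) (blast intro: has_derivative_continuous)

lemma holomorphic_on_slice:
  fixes F :: "complex^'n \<Rightarrow> complex^'m"
  assumes holo: "holo_on F D" and X: "open X" and slice: "\<And>x. x \<in> X \<Longrightarrow> vec_upd z j x \<in> D"
  shows "(\<lambda>x. F (vec_upd z j x) $ i) holomorphic_on X"
  unfolding holomorphic_on_open[OF X]
proof
  fix x assume x: "x \<in> X"
  obtain L where L: "(F has_derivative L) (at (vec_upd z j x))" and lin: "Vector_Spaces.linear (*s) (*s) L"
    using holo slice[OF x] unfolding holo_on_def by blast
  define A where "A h = vec_upd (0::complex^'n) j h" for h
  have "linear A"
    by (rule linearI) (auto simp: A_def vec_eq_iff)
  then have "((\<lambda>y. A y + vec_upd z j 0) has_derivative A) (at x)"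
    by (intro has_derivative_add_const bounded_linear.has_derivative[of A] has_derivative_ident)
       (simp add: linear_conv_bounded_linear)
  moreover have "(\<lambda>y. A y + vec_upd z j 0) = vec_upd z j"
    by (auto simp: A_def vec_eq_iff)
  ultimately have "(vec_upd z j has_derivative A) (at x)"
    by simp
  from has_derivative_compose[OF this L]
  have "((\<lambda>y. F (vec_upd z j y) $ i) has_derivative (\<lambda>h. L (A h) $ i)) (at x)"
    by (rule bounded_linear.has_derivative[OF bounded_linear_vec_nth])
  moreover have "(\<lambda>h. L (A h) $ i) = (*) (L (A 1) $ i)"
  proof
    fix h
    have "A h = h *s A 1"
      by (auto simp: A_def vec_eq_iff)
    then show "L (A h) $ i = L (A 1) $ i * h"
      using lin by (simp add: Vector_Spaces.linear_iff mult.commute)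
  qed
  ultimately show "\<exists>f'. ((\<lambda>x. F (vec_upd z j x) $ i) has_field_derivative f') (at x)"
    unfolding has_field_derivative_def by auto
qed

lemma constant_if_slices_constant:
  assumes slices: "\<And>z j x. z \<in> punctured_power S \<Longrightarrow> x \<notin> S \<Longrightarrow> g (vec_upd z j x) = g z"
    and z: "z \<in> punctured_power S" and w: "w \<in> punctured_power S"
  shows "g w = g z"
proof -
  define mix where "mix A = (\<chi> k. if k \<in> A then w $ k else z $ k)" for A
  have "mix A \<in> punctured_power S \<and> g (mix A) = g z" if "finite A" for A
    using that
  proof (induction A rule: finite_induct)
    case empty
    then show ?case
      using z by (simp add: mix_def)
  next
    case (insert j A)
    have "mix (insert j A) = vec_upd (mix A) j (w $ j)"
      by (auto simp: mix_def vec_eq_iff)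
    then show ?case
      using insert.IH slices[of "mix A" "w $ j" j] w by simp
  qed
  then have "g (mix UNIV) = g z"
    by simp
  moreover have "mix UNIV = w"
    by (simp add: mix_def vec_eq_iff)
  ultimately show ?thesis
    by simp
qed

lemma closedin_Ball_level_set:
  fixes h :: "'i \<Rightarrow> 'a::topological_space \<Rightarrow> 'b::t1_space"
  assumes "A \<noteq> {}" and "\<And>x. x \<in> A \<Longrightarrow> continuous_on D (h x)"
  shows "closedin (top_of_set D) {z\<in>D. \<forall>x\<in>A. h x z = c}"
proof -
  have "closedin (top_of_set D) (\<Inter>x\<in>A. {z\<in>D. h x z = c})"
    using assms by (intro closedin_INT continuous_closedin_preimage_constant)
  moreover have "{z\<in>D. \<forall>x\<in>A. h x z = c} = (\<Inter>x\<in>A. {z\<in>D. h x z = c})"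
    using assms(1) by auto
  ultimately show ?thesis
    by simp
qed

lemma two_points_notin_finite:
  assumes "finite (S :: complex set)"
  obtains a b where "a \<notin> S" "b \<notin> S" "a \<noteq> b"
proof -
  obtain a where "a \<notin> S"
    using ex_new_if_finite[OF infinite_UNIV_char_0 assms] by blast
  moreover obtain b where "b \<notin> insert a S"
    using ex_new_if_finite[OF infinite_UNIV_char_0 finite_insert[THEN iffD2, OF assms]] by blast
  ultimately show thesis
    using that by blast
qed

(* The two alternatives split the connected domain into disjoint relatively closed sets;
   they are disjoint because - S contains two points. *)
lemma uniform_slice_alternative:
  fixes g :: "complex^'n \<Rightarrow> complex"
  assumes S: "finite S" and cont: "continuous_on (punctured_power S) g"
    and slices: "\<And>z. z \<in> punctured_power S \<Longrightarrow>
      (\<forall>x. x \<notin> S \<longrightarrow> g (vec_upd z j x) = g z) \<or> (\<forall>x. x \<notin> S \<longrightarrow> g (vec_upd z j x) = x)"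
  shows "(\<forall>z\<in>punctured_power S. \<forall>x. x \<notin> S \<longrightarrow> g (vec_upd z j x) = g z) \<or>
         (\<forall>z\<in>punctured_power S. \<forall>x. x \<notin> S \<longrightarrow> g (vec_upd z j x) = x)"
proof -
  let ?D = "punctured_power S :: (complex^'n) set"
  obtain a b where a: "a \<notin> S" and b: "b \<notin> S" "b \<noteq> a"
    using two_points_notin_finite[OF S] by metis
  have "- S \<noteq> {}"
    using a by blast
  define C where "C = {z\<in>?D. \<forall>x\<in>- S. g (vec_upd z j x) - g z = 0}"
  define I where "I = {z\<in>?D. \<forall>x\<in>- S. g (vec_upd z j x) - x = 0}"
  have cont_slice: "continuous_on ?D (\<lambda>z. g (vec_upd z j x))" if "x \<in> - S" for x
    using that by (intro continuous_on_compose2[OF cont continuous_on_vec_upd]) auto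
  have "closedin (top_of_set ?D) C"
    unfolding C_def using \<open>- S \<noteq> {}\<close>
    by (intro closedin_Ball_level_set continuous_on_diff cont_slice cont)
  moreover have "closedin (top_of_set ?D) I"
    unfolding I_def using \<open>- S \<noteq> {}\<close>
    by (intro closedin_Ball_level_set continuous_on_diff cont_slice continuous_on_const)
  moreover have "C \<union> I = ?D"
  proof
    show "C \<union> I \<subseteq> ?D"
      by (auto simp: C_def I_def)
    show "?D \<subseteq> C \<union> I"
    proof
      fix z assume "z \<in> ?D"
      then show "z \<in> C \<union> I"
        using slices[of z] by (auto simp: C_def I_def)
    qed
  qed
  moreover have "C \<inter> I = {}"
  proof (rule ccontr)
    assume "C \<inter> I \<noteq> {}"
    then obtain z where "z \<in> C" "z \<in> I"
      by blast
    then have "g (vec_upd z j x) = g z" "g (vec_upd z j x) = x" if "x \<notin> S" for x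
      using that by (simp_all add: C_def I_def)
    then have "a = g z" "b = g z"
      using a b by metis+
    with b(2) show False
      by simp
  qed
  moreover have "connected ?D"
    using S by (simp add: path_connected_imp_connected path_connected_punctured_power countable_finite)
  ultimately have "C = ?D \<or> I = ?D"
    unfolding connected_closedin_eq by blast
  then show ?thesis
    by (auto simp: C_def I_def)
qed

lemma constant_or_coordinate:
  fixes g :: "complex^'n \<Rightarrow> complex"
  assumes S: "finite S" and cont: "continuous_on (punctured_power S) g"
    and slices: "\<And>z j. z \<in> punctured_power S \<Longrightarrow>
      (\<forall>x. x \<notin> S \<longrightarrow> g (vec_upd z j x) = g z) \<or> (\<forall>x. x \<notin> S \<longrightarrow> g (vec_upd z j x) = x)"
  shows "(\<forall>z\<in>punctured_power S. \<forall>w\<in>punctured_power S. g w = g z) \<or>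
         (\<exists>j. \<forall>z\<in>punctured_power S. g z = z $ j)"
proof (cases "\<exists>j. \<forall>z\<in>punctured_power S. \<forall>x. x \<notin> S \<longrightarrow> g (vec_upd z j x) = x")
  case True
  then obtain j where "\<forall>z\<in>punctured_power S. \<forall>x. x \<notin> S \<longrightarrow> g (vec_upd z j x) = x"
    by blast
  then have "g z = z $ j" if "z \<in> punctured_power S" for z
    using that by (auto dest!: bspec[of _ _ z] spec[of _ "z $ j"])
  then show ?thesis
    by blast
next
  case False
  then have "g (vec_upd z j x) = g z" if "z \<in> punctured_power S" "x \<notin> S" for z j x
    using uniform_slice_alternative[OF S cont slices, of j] that by blast
  then show ?thesis
    using constant_if_slices_constant by blast
qed

theorem rigid_self_map_component:
  fixes F :: "complex^'n \<Rightarrow> complex^'n"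
  assumes S: "finite S" "rigid S" and holo: "holo_on F (punctured_power S)"
    and maps: "\<And>z. z \<in> punctured_power S \<Longrightarrow> F z \<in> punctured_power S"
  shows "(\<forall>z\<in>punctured_power S. \<forall>w\<in>punctured_power S. F w $ i = F z $ i) \<or>
         (\<exists>j. \<forall>z\<in>punctured_power S. F z $ i = z $ j)"
proof (rule constant_or_coordinate[OF S(1)])
  show "continuous_on (punctured_power S) (\<lambda>z. F z $ i)"
    using holo_on_imp_continuous_on[OF holo] by (intro continuous_intros)
  fix z :: "complex^'n" and j assume z: "z \<in> punctured_power S"
  let ?h = "\<lambda>x. F (vec_upd z j x) $ i"
  have "?h holomorphic_on - S"
    using z S(1) by (intro holomorphic_on_slice[OF holo]) (auto intro: finite_imp_closed)
  moreover have "\<forall>x. x \<notin> S \<longrightarrow> ?h x \<notin> S"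
    using maps z by auto
  ultimately have "(\<exists>c. \<forall>x. x \<notin> S \<longrightarrow> ?h x = c) \<or> (\<forall>x. x \<notin> S \<longrightarrow> ?h x = x)"
    using S(2) unfolding rigid_def by blast
  moreover have "z $ j \<notin> S" "?h (z $ j) = F z $ i"
    using z by simp_all
  ultimately show "(\<forall>x. x \<notin> S \<longrightarrow> ?h x = F z $ i) \<or> (\<forall>x. x \<notin> S \<longrightarrow> ?h x = x)"
    by metis
qed

theorem holo_map_punctured_power_constant:
  fixes F :: "complex^'n \<Rightarrow> complex^'n"
  assumes S: "finite S" and T: "finite T" "2 \<le> card T" and card: "card S < card T"
    and holo: "holo_on F (punctured_power S)" and maps: "\<And>z. z \<in> punctured_power S \<Longrightarrow> F z \<in> punctured_power T"
    and z: "z \<in> punctured_power S" and w: "w \<in> punctured_power S"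
  shows "F w = F z"
proof -
  have "F w $ i = F z $ i" for i
  proof (rule constant_if_slices_constant[OF _ z w])
    fix y :: "complex^'n" and j x assume y: "y \<in> punctured_power S" and x: "x \<notin> S"
    let ?h = "\<lambda>x. F (vec_upd y j x) $ i"
    have holh: "?h holomorphic_on - S"
      using y S by (intro holomorphic_on_slice[OF holo]) (auto intro: finite_imp_closed)
    have mapsh: "\<And>x. x \<notin> S \<Longrightarrow> ?h x \<notin> T"
      using maps y by auto
    have "y $ j \<notin> S"
      using y by simp
    from holomorphic_compl_map_constant[OF S T card holh mapsh x this]
    have "?h x = ?h (y $ j)" .
    then show "F (vec_upd y j x) $ i = F y $ i"
      by simp
  qed
  then show ?thesis
    by (simp add: vec_eq_iff)
qed

lemma no_injective_holo_map_punctured_power: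
  fixes F :: "complex^'n \<Rightarrow> complex^'n"
  assumes S: "finite S" and T: "finite T" "2 \<le> card T" and card: "card S < card T"
    and holo: "holo_on F (punctured_power S)" and maps: "\<And>z. z \<in> punctured_power S \<Longrightarrow> F z \<in> punctured_power T"
  shows "\<not> inj_on F (punctured_power S)"
proof -
  have "infinite (punctured_power S :: (complex^'n) set)"
    using unbounded_punctured_power[OF finite_imp_bounded[OF S]] finite_imp_bounded by blast
  then obtain z :: "complex^'n" where z: "z \<in> punctured_power S"
    using infinite_imp_nonempty by blast
  have "infinite (punctured_power S - {z} :: (complex^'n) set)"
    using \<open>infinite _\<close> by simp
  then obtain w where w: "w \<in> punctured_power S - {z}"
    using infinite_imp_nonempty by blast
  note zw = z w
  with holo_map_punctured_power_constant[OF S T card holo maps] show ?thesis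
    unfolding inj_on_def by blast
qed

section \<open>The semigroup of holomorphic self-maps\<close>

lemma End_holo_mapsto: "F \<in> End_holo D \<Longrightarrow> z \<in> D \<Longrightarrow> F z \<in> D"
  unfolding End_holo_def by blast

lemma End_holo_undefined: "F \<in> End_holo D \<Longrightarrow> z \<notin> D \<Longrightarrow> F z = undefined"
  unfolding End_holo_def by (blast intro: extensional_arb)

definition selection_map :: "('n \<Rightarrow> complex + 'n) \<Rightarrow> complex^'n \<Rightarrow> complex^'n" where
  "selection_map \<sigma> z = (\<chi> i. case \<sigma> i of Inl c \<Rightarrow> c | Inr j \<Rightarrow> z $ j)"

lemma holo_on_selection_map:
  fixes \<sigma> :: "'n::finite \<Rightarrow> complex + 'n"
  shows "holo_on (selection_map \<sigma>) D"
proof -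
  define M :: "complex^'n \<Rightarrow> complex^'n" where
    "M h = (\<chi> i. case \<sigma> i of Inl c \<Rightarrow> 0 | Inr j \<Rightarrow> h $ j)" for h
  define b :: "complex^'n" where "b = (\<chi> i. case \<sigma> i of Inl c \<Rightarrow> c | Inr j \<Rightarrow> 0)"
  have "linear M"
    by (rule linearI) (auto simp: M_def vec_eq_iff split: sum.split)
  then have "((\<lambda>y. M y + b) has_derivative M) (at z)" for z
    by (intro has_derivative_add_const bounded_linear.has_derivative[of M] has_derivative_ident)
       (simp add: linear_conv_bounded_linear)
  moreover have "(\<lambda>y. M y + b) = selection_map \<sigma>"
    by (auto simp: M_def b_def selection_map_def vec_eq_iff split: sum.split)
  ultimately have "(selection_map \<sigma> has_derivative M) (at z)" for z
    by simp
  moreover have "Vector_Spaces.linear (*s) (*s) M"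
    unfolding Vector_Spaces.linear_iff
    by (auto simp: vec.vector_space_axioms M_def vec_eq_iff split: sum.split)
  ultimately show ?thesis
    unfolding holo_on_def by blast
qed

lemma holo_on_restrict:
  assumes "open D" and holo: "holo_on F D" shows "holo_on (restrict F D) D"
  unfolding holo_on_def
proof
  fix z assume "z \<in> D"
  then obtain L where "(F has_derivative L) (at z)" "Vector_Spaces.linear (*s) (*s) L"
    using holo unfolding holo_on_def by blast
  moreover from this(1) have "(restrict F D has_derivative L) (at z)"
    by (rule has_derivative_transform_within_open[OF _ \<open>open D\<close> \<open>z \<in> D\<close>]) simp
  ultimately show "\<exists>L. (restrict F D has_derivative L) (at z) \<and> Vector_Spaces.linear (*s) (*s) L"
    by blast
qed

lemma selection_map_in_End_holo:
  assumes "finite S" and "range \<sigma> \<inter> Inl ` S = {}"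
  shows "restrict (selection_map \<sigma>) (punctured_power S) \<in> End_holo (punctured_power S)"
proof -
  have "selection_map \<sigma> z \<in> punctured_power S" if "z \<in> punctured_power S" for z
    using that assms(2) by (auto simp: selection_map_def split: sum.split)
  then show ?thesis
    using assms(1)
    by (auto simp: End_holo_def finite_imp_closed open_punctured_power holo_on_selection_map holo_on_restrict)
qed

lemma rigid_self_map_component_selection:
  fixes F :: "complex^'n \<Rightarrow> complex^'n"
  assumes S: "finite S" "rigid S" and F: "F \<in> End_holo (punctured_power S)"
  shows "\<exists>s. s \<notin> Inl ` S \<and> (\<forall>z\<in>punctured_power S. F z $ i = (case s of Inl c \<Rightarrow> c | Inr j \<Rightarrow> z $ j))"
proof -
  have holo: "holo_on F (punctured_power S)"
    using F by (simp add: End_holo_def)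
  note maps = End_holo_mapsto[OF F]
  obtain z0 :: "complex^'n" where z0: "z0 \<in> punctured_power S"
    using domain_cn_punctured_power[OF S(1)] unfolding domain_cn_def by blast
  from rigid_self_map_component[OF S holo maps, of i] show ?thesis
  proof
    assume const: "\<forall>z\<in>punctured_power S. \<forall>w\<in>punctured_power S. F w $ i = F z $ i"
    have "F z $ i = F z0 $ i" if "z \<in> punctured_power S" for z
      using const z0 that by blast
    moreover have "F z0 $ i \<notin> S"
      using maps[OF z0] by simp
    ultimately show ?thesis
      by (intro exI[of _ "Inl (F z0 $ i)"]) auto
  next
    assume "\<exists>j. \<forall>z\<in>punctured_power S. F z $ i = z $ j"
    then obtain j where "\<forall>z\<in>punctured_power S. F z $ i = z $ j"
      by blast
    then show ?thesis
      by (intro exI[of _ "Inr j"]) auto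
  qed
qed

theorem End_holo_punctured_power_selection:
  fixes F :: "complex^'n \<Rightarrow> complex^'n"
  assumes S: "finite S" "rigid S" and F: "F \<in> End_holo (punctured_power S)"
  obtains \<sigma> where "range \<sigma> \<inter> Inl ` S = {}" "F = restrict (selection_map \<sigma>) (punctured_power S)"
proof -
  have "\<forall>i. \<exists>s. s \<notin> Inl ` S \<and>
      (\<forall>z\<in>punctured_power S. F z $ i = (case s of Inl c \<Rightarrow> c | Inr j \<Rightarrow> z $ j))"
    using rigid_self_map_component_selection[OF S F] by blast
  then obtain \<sigma> where \<sigma>: "\<forall>i. \<sigma> i \<notin> Inl ` S \<and>
      (\<forall>z\<in>punctured_power S. F z $ i = (case \<sigma> i of Inl c \<Rightarrow> c | Inr j \<Rightarrow> z $ j))"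
    by (rule choice[THEN exE])
  show thesis
  proof
    show "range \<sigma> \<inter> Inl ` S = {}"
      using \<sigma> by blast
    show "F = restrict (selection_map \<sigma>) (punctured_power S)"
    proof
      fix z
      show "F z = restrict (selection_map \<sigma>) (punctured_power S) z"
        using \<sigma> End_holo_undefined[OF F, of z] by (simp add: selection_map_def vec_eq_iff)
    qed
  qed
qed

definition vec_map :: "('a \<Rightarrow> 'b) \<Rightarrow> 'a^'n \<Rightarrow> 'b^'n" where
  "vec_map \<phi> z = (\<chi> i. \<phi> (z $ i))"

lemma vec_map_nth [simp]: "vec_map \<phi> z $ i = \<phi> (z $ i)"
  by (simp add: vec_map_def)

lemma conjugate_End_holo_punctured_power:
  fixes F :: "complex^'n \<Rightarrow> complex^'n"
  assumes S: "finite S" "rigid S" and T: "finite T"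
    and \<phi>: "\<And>x. x \<notin> S \<Longrightarrow> \<phi> x \<notin> T" and \<psi>: "\<And>y. y \<notin> T \<Longrightarrow> \<psi> y \<notin> S"
    and \<phi>\<psi>: "\<And>y. y \<notin> T \<Longrightarrow> \<phi> (\<psi> y) = y"
    and F: "F \<in> End_holo (punctured_power S)"
  shows "restrict (vec_map \<phi> \<circ> F \<circ> vec_map \<psi>) (punctured_power T) \<in> End_holo (punctured_power T)"
proof -
  obtain \<sigma> where \<sigma>: "range \<sigma> \<inter> Inl ` S = {}" and F_eq: "F = restrict (selection_map \<sigma>) (punctured_power S)"
    using End_holo_punctured_power_selection[OF S F] by blast
  define \<tau> where "\<tau> = map_sum \<phi> id \<circ> \<sigma>"
  have "\<tau> i \<notin> Inl ` T" for i
  proof (cases "\<sigma> i")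
    case (Inl c)
    then have "c \<notin> S"
      using \<sigma> by blast
    with Inl show ?thesis
      using \<phi> by (auto simp: \<tau>_def)
  qed (auto simp: \<tau>_def)
  then have "range \<tau> \<inter> Inl ` T = {}"
    by blast
  moreover have "restrict (vec_map \<phi> \<circ> F \<circ> vec_map \<psi>) (punctured_power T) = restrict (selection_map \<tau>) (punctured_power T)"
  proof
    fix y :: "complex^'n"
    show "restrict (vec_map \<phi> \<circ> F \<circ> vec_map \<psi>) (punctured_power T) y = restrict (selection_map \<tau>) (punctured_power T) y"
    proof (cases "y \<in> punctured_power T")
      case True
      then have "vec_map \<psi> y \<in> punctured_power S"
        using \<psi> by simp
      with True show ?thesis
        using \<phi>\<psi> by (simp add: F_eq selection_map_def \<tau>_def vec_eq_iff split: sum.split)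
    next
      case False
      then show ?thesis
        by (simp only: restrict_apply if_not_P[OF False] if_False)
    qed
  qed
  ultimately show ?thesis
    using selection_map_in_End_holo[OF T] by simp
qed

lemma semigroups_iso_conjugate:
  assumes h: "\<And>z. z \<in> D1 \<Longrightarrow> h z \<in> D2" "\<And>z. z \<in> D1 \<Longrightarrow> k (h z) = z"
    and k: "\<And>w. w \<in> D2 \<Longrightarrow> k w \<in> D1" "\<And>w. w \<in> D2 \<Longrightarrow> h (k w) = w"
    and End12: "\<And>F. F \<in> End_holo D1 \<Longrightarrow> restrict (h \<circ> F \<circ> k) D2 \<in> End_holo D2"
    and End21: "\<And>G. G \<in> End_holo D2 \<Longrightarrow> restrict (k \<circ> G \<circ> h) D1 \<in> End_holo D1"
  shows "semigroups_iso D1 D2"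
proof -
  define \<Phi> where "\<Phi> F = restrict (h \<circ> F \<circ> k) D2" for F
  define \<Psi> where "\<Psi> G = restrict (k \<circ> G \<circ> h) D1" for G
  have "bij_betw \<Phi> (End_holo D1) (End_holo D2)"
  proof (rule bij_betwI[where g = \<Psi>])
    show "\<Phi> \<in> End_holo D1 \<rightarrow> End_holo D2"
      using End12 by (simp add: \<Phi>_def)
    show "\<Psi> \<in> End_holo D2 \<rightarrow> End_holo D1"
      using End21 by (simp add: \<Psi>_def)
    show "\<Psi> (\<Phi> F) = F" if F: "F \<in> End_holo D1" for F
    proof
      fix z
      show "\<Psi> (\<Phi> F) z = F z"
        by (cases "z \<in> D1") (simp_all add: \<Phi>_def \<Psi>_def h End_holo_mapsto[OF F] End_holo_undefined[OF F])
    qed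
    show "\<Phi> (\<Psi> G) = G" if G: "G \<in> End_holo D2" for G
    proof
      fix w
      show "\<Phi> (\<Psi> G) w = G w"
        by (cases "w \<in> D2") (simp_all add: \<Phi>_def \<Psi>_def k End_holo_mapsto[OF G] End_holo_undefined[OF G])
    qed
  qed
  moreover have "\<Phi> (comp_on D1 F G) = comp_on D2 (\<Phi> F) (\<Phi> G)"
    if "F \<in> End_holo D1" and G: "G \<in> End_holo D1" for F G
  proof
    fix w
    show "\<Phi> (comp_on D1 F G) w = comp_on D2 (\<Phi> F) (\<Phi> G) w"
      by (cases "w \<in> D2") (simp_all add: \<Phi>_def comp_on_def h k End_holo_mapsto[OF G])
  qed
  ultimately show ?thesis
    unfolding semigroups_iso_def by blast
qed

lemma Diff_finite_eqpoll:
  assumes "infinite A" "finite B" shows "A - B \<approx> A"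
  using assms(2)
proof (induction B rule: finite_induct)
  case (insert b B)
  have "A - insert b B \<approx> A - B"
  proof (cases "b \<in> A - B")
    case True
    have "infinite (A - insert b B)"
      using assms(1) insert.hyps(1) by (simp add: Diff_infinite_finite)
    then have "insert b (A - insert b B) \<approx> A - insert b B"
      by (rule infinite_insert_eqpoll)
    moreover have "insert b (A - insert b B) = A - B"
      using True by auto
    ultimately have "A - B \<approx> A - insert b B"
      by simp
    then show ?thesis
      by (rule eqpoll_sym)
  next
    case False
    then have "A - insert b B = A - B"
      by auto
    then show ?thesis
      by simp
  qed
  then show ?case
    using insert.IH by (rule eqpoll_trans)
qed simp

lemma bij_betw_compl_finite:
  fixes S T :: "complex set"
  assumes "finite S" "finite T"
  obtains \<phi> where "bij_betw \<phi> (- S) (- T)"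
proof -
  have S: "- S \<approx> (UNIV :: complex set)" and T: "- T \<approx> (UNIV :: complex set)"
    using assms by (simp_all add: Compl_eq_Diff_UNIV Diff_finite_eqpoll infinite_UNIV_char_0)
  have "- S \<approx> - T"
    using eqpoll_trans[OF S eqpoll_sym[OF T]] .
  then show thesis
    using that unfolding eqpoll_def by blast
qed

theorem semigroups_iso_punctured_power:
  assumes S: "finite S" "rigid S" and T: "finite T" "rigid T"
  shows "semigroups_iso (punctured_power S :: (complex^'n) set) (punctured_power T)"
proof -
  obtain \<phi> where \<phi>: "bij_betw \<phi> (- S) (- T)"
    using bij_betw_compl_finite[OF S(1) T(1)] .
  define \<psi> where "\<psi> = inv_into (- S) \<phi>"
  have \<phi>T: "\<phi> x \<notin> T" if "x \<notin> S" for x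
    using bij_betw_apply[OF \<phi>] that by auto
  have \<psi>S: "\<psi> y \<notin> S" if "y \<notin> T" for y
    using bij_betw_apply[OF bij_betw_inv_into[OF \<phi>]] that by (auto simp: \<psi>_def)
  have \<psi>\<phi>: "\<psi> (\<phi> x) = x" if "x \<notin> S" for x
    using bij_betw_inv_into_left[OF \<phi>] that by (simp add: \<psi>_def)
  have \<phi>\<psi>: "\<phi> (\<psi> y) = y" if "y \<notin> T" for y
    using bij_betw_inv_into_right[OF \<phi>] that by (simp add: \<psi>_def)
  show ?thesis
  proof (rule semigroups_iso_conjugate[where h = "vec_map \<phi>" and k = "vec_map \<psi>"])
    show "vec_map \<phi> z \<in> punctured_power T" "vec_map \<psi> (vec_map \<phi> z) = z"
      if "z \<in> punctured_power S" for z :: "complex^'n"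
      using that \<phi>T \<psi>\<phi> by (simp_all add: vec_eq_iff)
    show "vec_map \<psi> w \<in> punctured_power S" "vec_map \<phi> (vec_map \<psi> w) = w"
      if "w \<in> punctured_power T" for w :: "complex^'n"
      using that \<psi>S \<phi>\<psi> by (simp_all add: vec_eq_iff)
    show "restrict (vec_map \<phi> \<circ> F \<circ> vec_map \<psi>) (punctured_power T) \<in> End_holo (punctured_power T)"
      if "F \<in> End_holo (punctured_power S)" for F :: "complex^'n \<Rightarrow> complex^'n"
      using conjugate_End_holo_punctured_power[OF S T(1) \<phi>T \<psi>S \<phi>\<psi> that] .
    show "restrict (vec_map \<psi> \<circ> G \<circ> vec_map \<phi>) (punctured_power S) \<in> End_holo (punctured_power S)"
      if "G \<in> End_holo (punctured_power T)" for G :: "complex^'n \<Rightarrow> complex^'n"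
      using conjugate_End_holo_punctured_power[OF T S(1) \<psi>S \<phi>T \<psi>\<phi> that] .
  qed
qed

theorem no_biholo_punctured_power:
  assumes S: "finite S" and T: "finite T" "2 \<le> card T" and card: "card S < card T"
  shows "\<nexists>f. biholo_onto f (punctured_power S :: (complex^'n) set) (punctured_power T)"
proof
  assume "\<exists>f. biholo_onto f (punctured_power S :: (complex^'n) set) (punctured_power T)"
  then obtain f :: "complex^'n \<Rightarrow> complex^'n"
    where f: "bij_betw f (punctured_power S) (punctured_power T)" "holo_on f (punctured_power S)"
    unfolding biholo_onto_def by blast
  then show False
    using no_injective_holo_map_punctured_power[OF S T card f(2) bij_betw_apply[OF f(1)]]
      bij_betw_imp_inj_on[OF f(1)] by blast
qed

lemma cconj_cconj [simp]: "cconj (cconj z) = z"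
  by (simp add: cconj_def vec_eq_iff)

lemma cconj_punctured_power: "z \<in> punctured_power T \<Longrightarrow> cconj z \<in> punctured_power (cnj ` T)"
  by (auto simp: cconj_def)

theorem no_antibiholo_punctured_power:
  assumes S: "finite S" and T: "finite T" "2 \<le> card T" and card: "card S < card T"
  shows "\<nexists>f. antibiholo_onto f (punctured_power S :: (complex^'n) set) (punctured_power T)"
proof
  assume "\<exists>f. antibiholo_onto f (punctured_power S :: (complex^'n) set) (punctured_power T)"
  then obtain f :: "complex^'n \<Rightarrow> complex^'n"
    where f: "bij_betw f (punctured_power S) (punctured_power T)" "holo_on (\<lambda>z. cconj (f z)) (punctured_power S)"
    unfolding antibiholo_onto_def antiholo_on_def by blast
  have "card (cnj ` T) = card T"
    by (rule card_image) (simp add: inj_on_def)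
  then have T': "finite (cnj ` T)" "2 \<le> card (cnj ` T)" "card S < card (cnj ` T)"
    using T card by simp_all
  have "inj_on (\<lambda>z. cconj (f z)) (punctured_power S)"
  proof (rule inj_onI)
    fix x y assume xy: "x \<in> punctured_power S" "y \<in> punctured_power S" "cconj (f x) = cconj (f y)"
    then have "f x = f y"
      by (metis cconj_cconj)
    with xy(1,2) show "x = y"
      using inj_on_eq_iff[OF bij_betw_imp_inj_on[OF f(1)]] by blast
  qed
  moreover have "cconj (f z) \<in> punctured_power (cnj ` T)" if "z \<in> punctured_power S" for z
    using cconj_punctured_power bij_betw_apply[OF f(1) that] by blast
  ultimately show False
    using no_injective_holo_map_punctured_power[OF S T' f(2)] by blast
qed

theorem theorem3:
  shows "\<exists>D1 D2 :: (complex^'n) set.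
           domain_cn D1 \<and> domain_cn D2 \<and> \<not> bounded D1 \<and> \<not> bounded D2 \<and>
           semigroups_iso D1 D2 \<and>
           (\<nexists>f. biholo_onto f D1 D2) \<and> (\<nexists>f. antibiholo_onto f D1 D2)"
proof (intro exI conjI)
  let ?S = "{0, 1, 3, 8} :: complex set" and ?T = "{-1, 0, 1, 3, 8} :: complex set"
  let ?D1 = "punctured_power ?S :: (complex^'n) set" and ?D2 = "punctured_power ?T :: (complex^'n) set"
  have S: "finite ?S" and T: "finite ?T" "2 \<le> card ?T" and card: "card ?S < card ?T"
    by simp_all
  show "domain_cn ?D1"
    by (rule domain_cn_punctured_power[OF S])
  show "domain_cn ?D2"
    by (rule domain_cn_punctured_power[OF T(1)])
  show "\<not> bounded ?D1"
    by (rule unbounded_punctured_power[OF finite_imp_bounded[OF S]])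
  show "\<not> bounded ?D2"
    by (rule unbounded_punctured_power[OF finite_imp_bounded[OF T(1)]])
  show "semigroups_iso ?D1 ?D2"
    by (rule semigroups_iso_punctured_power[OF S rigid_0_1_3_8 T(1) rigid_minus_1_0_1_3_8])
  show "\<nexists>f. biholo_onto f ?D1 ?D2"
    by (rule no_biholo_punctured_power[OF S T card])
  show "\<nexists>f. antibiholo_onto f ?D1 ?D2"
    by (rule no_antibiholo_punctured_power[OF S T card])
qed

end
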